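(* Let \(a,b,c\) be positive integers and let \(m\) be a positive integer that is not a perfect square. Then \((a,\,b+c\sqrt m)\) spans \(1\) in \(\mathbb Z[\sqrt m]\) if and only if \((a,\,b^2-c^2m)\) spans \(1\) in \(\mathbb Z\), i.e. \(\gcd(a,b^2-c^2m)=1\).
   Context: \(\mathbb Z[\sqrt m]=\{u+v\sqrt m\mid u,v\in\mathbb Z\}\). For a commutative ring \(R\) with \(1\), a pair \((\alpha_1,\alpha_2)\) spans \(1\) in \(R\) if \(\lambda_1\alpha_1+\lambda_2\alpha_2=1\) for some \(\lambda_1,\lambda_2\in R\). *)

theory Defs
  imports Main
begin

text \<open>Elements u + v sqrt m of Z[sqrt m] are represented by integer pairs (u, v).
  Since m is not a perfect square, this representation is unique.\<close>

definition zsqrt_mult :: "int \<Rightarrow> int \<times> int \<Rightarrow> int \<times> int \<Rightarrow> int \<times> int" where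
  "zsqrt_mult m x y = (fst x * fst y + m * snd x * snd y, fst x * snd y + snd x * fst y)"

definition zsqrt_add :: "int \<times> int \<Rightarrow> int \<times> int \<Rightarrow> int \<times> int" where
  "zsqrt_add x y = (fst x + fst y, snd x + snd y)"

definition spans_one_zsqrt :: "int \<Rightarrow> int \<times> int \<Rightarrow> int \<times> int \<Rightarrow> bool" where
  "spans_one_zsqrt m \<alpha>1 \<alpha>2 \<longleftrightarrow>
     (\<exists>l1 l2. zsqrt_add (zsqrt_mult m l1 \<alpha>1) (zsqrt_mult m l2 \<alpha>2) = (1, 0))"

definition spans_one_int :: "int \<Rightarrow> int \<Rightarrow> bool" where
  "spans_one_int \<alpha>1 \<alpha>2 \<longleftrightarrow> (\<exists>l1 l2. l1 * \<alpha>1 + l2 * \<alpha>2 = 1)"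

end

theory Submission
  imports Defs
begin

text \<open>With N(u + v sqrt m) = u^2 - m v^2, multiplicative, and N(beta) = beta * conj(beta):
  if lambda1 a + lambda2 beta = 1, reducing the norm of both sides modulo a gives
  1 = N(lambda2) N(beta) mod a; conversely x a + y N(beta) = 1 rewrites as
  x a + (y conj(beta)) beta = 1.\<close>

definition zsqrt_norm :: "int \<Rightarrow> int \<times> int \<Rightarrow> int" where
  "zsqrt_norm m x = fst x ^ 2 - m * snd x ^ 2"

definition zsqrt_cnj :: "int \<times> int \<Rightarrow> int \<times> int" where
  "zsqrt_cnj x = (fst x, - snd x)"

lemma zsqrt_norm_mult:
  "zsqrt_norm m (zsqrt_mult m x y) = zsqrt_norm m x * zsqrt_norm m y"
  by (simp add: zsqrt_norm_def zsqrt_mult_def power2_eq_square algebra_simps)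

lemma zsqrt_mult_cnj: "zsqrt_mult m x (zsqrt_cnj x) = (zsqrt_norm m x, 0)"
  by (simp add: zsqrt_norm_def zsqrt_mult_def zsqrt_cnj_def power2_eq_square algebra_simps)

lemma zsqrt_mult_of_int: "zsqrt_mult m l (a, 0) = (a * fst l, a * snd l)"
  by (simp add: zsqrt_mult_def)

lemma zsqrt_norm_add_multiple:
  "a dvd zsqrt_norm m (zsqrt_add (a * p, a * q) y) - zsqrt_norm m y"
proof -
  have "zsqrt_norm m (zsqrt_add (a * p, a * q) y) - zsqrt_norm m y
      = a * (a * p ^ 2 - a * m * q ^ 2 + 2 * p * fst y - 2 * m * q * snd y)"
    by (simp add: zsqrt_norm_def zsqrt_add_def power2_eq_square algebra_simps)
  then show ?thesis by simp
qed

lemma spans_one_int_norm_if_spans_one_zsqrt: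
  assumes "spans_one_zsqrt m (a, 0) \<beta>"
  shows "spans_one_int a (zsqrt_norm m \<beta>)"
proof -
  obtain l1 l2 where "zsqrt_add (zsqrt_mult m l1 (a, 0)) (zsqrt_mult m l2 \<beta>) = (1, 0)"
    using assms unfolding spans_one_zsqrt_def by blast
  then have "zsqrt_add (a * fst l1, a * snd l1) (zsqrt_mult m l2 \<beta>) = (1, 0)"
    by (simp add: zsqrt_mult_of_int)
  then have "a dvd 1 - zsqrt_norm m l2 * zsqrt_norm m \<beta>"
    using zsqrt_norm_add_multiple[where a = a and p = "fst l1" and q = "snd l1" and m = m
        and y = "zsqrt_mult m l2 \<beta>"]
    by (simp add: zsqrt_norm_mult, simp add: zsqrt_norm_def)
  then obtain k where "1 - zsqrt_norm m l2 * zsqrt_norm m \<beta> = a * k"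
    by (rule dvdE)
  then have "k * a + zsqrt_norm m l2 * zsqrt_norm m \<beta> = 1"
    by (simp add: algebra_simps)
  then show ?thesis
    unfolding spans_one_int_def by blast
qed

lemma spans_one_zsqrt_if_spans_one_int_norm:
  assumes "spans_one_int a (zsqrt_norm m \<beta>)"
  shows "spans_one_zsqrt m (a, 0) \<beta>"
proof -
  obtain x y where xy: "x * a + y * zsqrt_norm m \<beta> = 1"
    using assms unfolding spans_one_int_def by blast
  have "zsqrt_mult m (y * fst \<beta>, - y * snd \<beta>) \<beta> = (y * zsqrt_norm m \<beta>, 0)"
    using zsqrt_mult_cnj[of m \<beta>]
    by (simp add: zsqrt_mult_def zsqrt_cnj_def algebra_simps)
  then have "zsqrt_add (zsqrt_mult m (x, 0) (a, 0)) (zsqrt_mult m (y * fst \<beta>, - y * snd \<beta>) \<beta>)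
      = (1, 0)"
    using xy by (simp add: zsqrt_add_def zsqrt_mult_def)
  then show ?thesis
    unfolding spans_one_zsqrt_def by blast
qed

lemma spans_one_zsqrt_iff_spans_one_int_norm:
  "spans_one_zsqrt m (a, 0) \<beta> \<longleftrightarrow> spans_one_int a (zsqrt_norm m \<beta>)"
  using spans_one_int_norm_if_spans_one_zsqrt spans_one_zsqrt_if_spans_one_int_norm by blast

theorem lemma1:
  fixes a b c m :: int
  assumes "a > 0" and "b > 0" and "c > 0" and "m > 0"
    and "\<not> (\<exists>k::int. m = k ^ 2)"
  shows "spans_one_zsqrt m (a, 0) (b, c) \<longleftrightarrow>
           spans_one_int a (b ^ 2 - c ^ 2 * m)"
proof -
  have "zsqrt_norm m (b, c) = b ^ 2 - c ^ 2 * m"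
    by (simp add: zsqrt_norm_def)
  then show ?thesis
    using spans_one_zsqrt_iff_spans_one_int_norm by metis
qed

end
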